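(* Let $n\ge 3$ be odd and let $a_0,a_1,\dots,a_{n-1}\in\mathbb{R}$. Let $A'$ be the $n\times n$ matrix with rows and columns indexed by $0,\dots,n-1$ (modulo $n$) with entries $(A')_{j,j+1}=a_{j+1}$, $(A')_{j,j-1}=-a_{j-1}$ (indices mod $n$) and all other entries zero, and let $\mathcal A(x)=\det(xI-A')$. If $a_0<0$, $a_k>0$ for all $k\neq0$, and $a_0+a_2<0$, then $$\mathcal A\big(\sqrt{-a_1(a_0+a_2)}\big)<0 .$$
   Context: For example, for $n$ odd the first row of $A'$ is $(0,a_1,0,\dots,0,-a_{n-1})$ and the last row is $(a_0,0,\dots,0,-a_{n-2},0)$. *)

theory Defs
  imports Complex_Main "Jordan_Normal_Form.Determinant"
begin

definition Amat :: "nat \<Rightarrow> (nat \<Rightarrow> real) \<Rightarrow> real mat" where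
  "Amat n a = mat n n (\<lambda>(i, j).
     if j = (i + 1) mod n then a j
     else if j = (i + n - 1) mod n then - a j
     else 0)"

definition charA :: "nat \<Rightarrow> (nat \<Rightarrow> real) \<Rightarrow> real \<Rightarrow> real" where
  "charA n a x = det (x \<cdot>\<^sub>m 1\<^sub>m n - Amat n a)"

end

theory Submission
  imports Defs
begin

text \<open>Expanding \<open>det (x I - A')\<close> along its first row leaves, besides two products of
  all the \<open>a\<^sub>k\<close> that cancel for odd \<open>n\<close>, three tridiagonal minors with diagonal \<open>x\<close> and
  off-diagonal products \<open>a\<^sub>k a\<^sub>k\<^sub>+\<^sub>1 > 0\<close>. Their determinants obey the continuant recurrence
  \<open>D\<^sub>m = x D\<^sub>m\<^sub>-\<^sub>1 + a\<^sub>k a\<^sub>k\<^sub>+\<^sub>1 D\<^sub>m\<^sub>-\<^sub>2\<close>, hence are positive and satisfy \<open>x D\<^sub>m\<^sub>-\<^sub>1 \<le> D\<^sub>m\<close> for \<open>x > 0\<close>.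
  At \<open>x\<^sup>2 = -a\<^sub>1 (a\<^sub>0 + a\<^sub>2)\<close> one step of the recurrence collapses the expansion to
  \<open>a\<^sub>1 a\<^sub>2 (x D\<^sub>n\<^sub>-\<^sub>3 - D\<^sub>n\<^sub>-\<^sub>2) + a\<^sub>0 a\<^sub>n\<^sub>-\<^sub>1 D'\<^sub>n\<^sub>-\<^sub>2\<close>: the first summand is \<open>\<le> 0\<close> and the
  second is \<open>< 0\<close> because \<open>a\<^sub>0 < 0\<close>.\<close>

lemma prod_list_diag_mat:
  assumes "A \<in> carrier_mat m m"
  shows "prod_list (diag_mat A) = (\<Prod>i<m. A $$ (i, i))"
  using assms by (simp add: diag_mat_def lessThan_atLeast0 flip: prod.distinct_set_conv_list)

text \<open>The principal submatrix of \<open>x I - A'\<close> on the indices \<open>s, \<dots>, s + m - 1\<close>, as long as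
  these avoid the wrap-around entries.\<close>

definition tridiag_mat :: "nat \<Rightarrow> nat \<Rightarrow> real \<Rightarrow> (nat \<Rightarrow> real) \<Rightarrow> real mat" where
  "tridiag_mat s m x a = mat m m (\<lambda>(i, j).
     if i = j then x
     else if j = Suc i then - a (s + j)
     else if i = Suc j then a (s + j)
     else 0)"

lemma tridiag_mat_carrier [simp]: "tridiag_mat s m x a \<in> carrier_mat m m"
  by (simp add: tridiag_mat_def)

lemma det_tridiag_mat_0 [simp]: "det (tridiag_mat s 0 x a) = 1"
  by (simp add: tridiag_mat_def)

lemma det_tridiag_mat_1 [simp]: "det (tridiag_mat s (Suc 0) x a) = x"
  by (subst det_single) (auto simp: tridiag_mat_def)

lemma det_tridiag_mat_Suc_Suc:
  "det (tridiag_mat s (Suc (Suc m)) x a) =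
     x * det (tridiag_mat (Suc s) (Suc m) x a) + a s * a (Suc s) * det (tridiag_mat (s + 2) m x a)"
proof -
  let ?T = "tridiag_mat s (Suc (Suc m)) x a"
  let ?C = "mat_delete ?T 0 1"
  have "det ?T = (\<Sum>j<Suc (Suc m). ?T $$ (0, j) * cofactor ?T 0 j)"
    by (rule laplace_expansion_row) simp_all
  also have "\<dots> = x * det (mat_delete ?T 0 0) + a (Suc s) * det ?C"
    by (simp only: sum.lessThan_Suc_shift) (simp add: tridiag_mat_def cofactor_def)
  also have "mat_delete ?T 0 0 = tridiag_mat (Suc s) (Suc m) x a"
    by (rule eq_matI) (auto simp: mat_delete_def tridiag_mat_def)
  also have "det ?C = (\<Sum>i<Suc m. ?C $$ (i, 0) * cofactor ?C i 0)"
    by (rule laplace_expansion_column) (simp_all add: mat_delete_def tridiag_mat_def)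
  also have "\<dots> = a s * det (mat_delete ?C 0 0)"
    by (simp only: sum.lessThan_Suc_shift) (simp add: tridiag_mat_def mat_delete_def cofactor_def)
  also have "mat_delete ?C 0 0 = tridiag_mat (s + 2) m x a"
    by (rule eq_matI) (auto simp: mat_delete_def tridiag_mat_def)
  finally show ?thesis
    by (simp add: algebra_simps)
qed

lemma det_tridiag_mat_pos:
  assumes "x > 0" and "\<And>k. s \<le> k \<Longrightarrow> k < s + m \<Longrightarrow> a k > 0"
  shows "det (tridiag_mat s m x a) > 0"
  using assms(2)
proof (induction m arbitrary: s rule: nat_less_induct)
  case (1 m)
  consider "m = 0" | "m = 1" | m' where "m = Suc (Suc m')"
    by (metis One_nat_def not0_implies_Suc)
  then show ?case
  proof cases
    case 1
    then show ?thesis by simp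
  next
    case 2
    then show ?thesis using \<open>x > 0\<close> by simp
  next
    case 3
    have "det (tridiag_mat (Suc s) (Suc m') x a) > 0" "det (tridiag_mat (s + 2) m' x a) > 0"
      using "1" 3 by auto
    moreover have "a s > 0" "a (Suc s) > 0"
      using "1.prems" 3 by auto
    ultimately show ?thesis
      using \<open>x > 0\<close> 3 by (simp add: det_tridiag_mat_Suc_Suc add_pos_pos)
  qed
qed

lemma det_tridiag_mat_Suc_ge:
  assumes "x > 0" and "\<And>k. s \<le> k \<Longrightarrow> k \<le> s + m \<Longrightarrow> a k > 0"
  shows "x * det (tridiag_mat (Suc s) m x a) \<le> det (tridiag_mat s (Suc m) x a)"
proof (cases m)
  case (Suc m')
  have "det (tridiag_mat (s + 2) m' x a) > 0"
    by (rule det_tridiag_mat_pos) (use assms Suc in auto)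
  moreover have "a s > 0" "a (Suc s) > 0"
    using assms(2) Suc by auto
  ultimately show ?thesis
    using Suc by (simp add: det_tridiag_mat_Suc_Suc)
qed simp

definition char_mat :: "nat \<Rightarrow> (nat \<Rightarrow> real) \<Rightarrow> real \<Rightarrow> real mat" where
  "char_mat n a x = x \<cdot>\<^sub>m 1\<^sub>m n - Amat n a"

lemma char_mat_dim [simp]: "dim_row (char_mat n a x) = n" "dim_col (char_mat n a x) = n"
  by (simp_all add: char_mat_def Amat_def)

lemma char_mat_carrier [simp]: "char_mat n a x \<in> carrier_mat n n"
  by (rule carrier_matI) simp_all

lemma charA_eq_det_char_mat: "charA n a x = det (char_mat n a x)"
  by (simp add: charA_def char_mat_def)

lemma char_mat_index:
  assumes "n \<ge> 3" and "i < n" and "j < n"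
  shows "char_mat n a x $$ (i, j) =
    (if i = j then x
     else if j = (if i + 1 < n then i + 1 else 0) then - a j
     else if j = (if 0 < i then i - 1 else n - 1) then a j
     else 0)"
proof -
  have "(i + 1) mod n = (if i + 1 < n then i + 1 else 0)"
  proof (cases "i + 1 < n")
    case False
    then have "i + 1 = n" using assms by simp
    then show ?thesis by simp
  qed simp
  moreover have "(i + n - 1) mod n = (if 0 < i then i - 1 else n - 1)"
  proof (cases "0 < i")
    case True
    then have "i + n - 1 = (i - 1) + n" by simp
    then have "(i + n - 1) mod n = (i - 1 + n) mod n" by (simp only:)
    also have "\<dots> = i - 1" using assms by simp
    finally show ?thesis using True by simp
  qed (use assms in simp)
  ultimately show ?thesis
    using assms by (auto simp: char_mat_def Amat_def)
qed

lemma char_mat_inner: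
  assumes "n \<ge> 3" and "0 < i" "i < n" and "0 < j" "j < n"
  shows "char_mat n a x $$ (i, j) =
    (if i = j then x else if j = i + 1 then - a j else if i = j + 1 then a j else 0)"
  using assms by (auto simp: char_mat_index)

lemma char_mat_row_0:
  assumes "n \<ge> 3" and "j < n"
  shows "char_mat n a x $$ (0, j) =
    (if j = 0 then x else if j = 1 then - a 1 else if j = n - 1 then a (n - 1) else 0)"
  using assms by (auto simp: char_mat_index)

lemma char_mat_col_0:
  assumes "n \<ge> 3" and "0 < i" "i < n"
  shows "char_mat n a x $$ (i, 0) = (if i = 1 then a 0 else if i = n - 1 then - a 0 else 0)"
  using assms by (auto simp: char_mat_index)

lemmas char_mat_simps = char_mat_inner char_mat_row_0 char_mat_col_0

lemma det_char_mat_expand_row_0: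
  assumes "n \<ge> 3"
  shows "det (char_mat n a x) = x * det (mat_delete (char_mat n a x) 0 0)
    + a 1 * det (mat_delete (char_mat n a x) 0 1)
    + (-1) ^ (n - 1) * a (n - 1) * det (mat_delete (char_mat n a x) 0 (n - 1))"
proof -
  let ?B = "char_mat n a x"
  have "det ?B = (\<Sum>j<n. ?B $$ (0, j) * cofactor ?B 0 j)"
    by (rule laplace_expansion_row) (use assms in simp_all)
  also have "\<dots> = (\<Sum>j\<in>{0, 1, n - 1}. ?B $$ (0, j) * cofactor ?B 0 j)"
    by (rule sum.mono_neutral_right) (use assms in \<open>auto simp: char_mat_row_0\<close>)
  finally show ?thesis
    using assms by (simp add: char_mat_row_0 cofactor_def)
qed

lemma char_mat_minor_0_0:
  assumes "n \<ge> 3"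
  shows "mat_delete (char_mat n a x) 0 0 = tridiag_mat 1 (n - 1) x a"
  by (rule eq_matI) (use assms in \<open>auto simp: mat_delete_def tridiag_mat_def char_mat_simps\<close>)

lemma det_char_mat_minor_0_1:
  assumes "n \<ge> 3"
  shows "det (mat_delete (char_mat n a x) 0 1) =
    a 0 * (det (tridiag_mat 2 (n - 2) x a) - (\<Prod>i = 2..<n. a i))"
proof -
  let ?C = "mat_delete (char_mat n a x) 0 1"
  let ?L = "mat_delete ?C (n - 2) 0"
  have C: "?C \<in> carrier_mat (n - 1) (n - 1)" and L: "?L \<in> carrier_mat (n - 2) (n - 2)"
    by (simp_all add: carrier_matI mat_delete_def)
  have "det ?C = (\<Sum>i<n - 1. ?C $$ (i, 0) * cofactor ?C i 0)"
    by (rule laplace_expansion_column[OF C]) (use assms in simp)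
  also have "\<dots> = (\<Sum>i\<in>{0, n - 2}. ?C $$ (i, 0) * cofactor ?C i 0)"
    by (rule sum.mono_neutral_right) (use assms in \<open>auto simp: mat_delete_def char_mat_simps\<close>)
  also have "\<dots> = a 0 * det (mat_delete ?C 0 0) - a 0 * (-1) ^ (n - 2) * det ?L"
    using assms by (simp add: mat_delete_def char_mat_simps cofactor_def)
  also have "mat_delete ?C 0 0 = tridiag_mat 2 (n - 2) x a"
    by (rule eq_matI) (use assms in \<open>auto simp: mat_delete_def tridiag_mat_def char_mat_simps\<close>)
  also have "det ?L = prod_list (diag_mat ?L)"
    by (rule det_lower_triangular[OF _ L]) (use assms in \<open>auto simp: mat_delete_def char_mat_simps\<close>)
  also have "\<dots> = (\<Prod>i<n - 2. - a (i + 2))"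
    unfolding prod_list_diag_mat[OF L]
    using assms by (auto simp: mat_delete_def char_mat_simps intro!: prod.cong)
  also have "\<dots> = (-1) ^ (n - 2) * (\<Prod>i = 2..<n. a i)"
    by (simp add: prod_uminus prod.atLeastLessThan_shift_0[of _ 2] lessThan_atLeast0 add.commute)
  finally show ?thesis
    by (simp add: algebra_simps flip: power_add mult_2)
qed

lemma det_char_mat_minor_0_last:
  assumes "n \<ge> 3"
  shows "det (mat_delete (char_mat n a x) 0 (n - 1)) =
    (-1) ^ (n - 1) * a 0 * det (tridiag_mat 1 (n - 2) x a) + (\<Prod>i<n - 1. a i)"
proof -
  let ?D = "mat_delete (char_mat n a x) 0 (n - 1)"
  let ?U = "mat_delete ?D (n - 2) (n - 2)"
  have D: "?D \<in> carrier_mat (n - 1) (n - 1)" and U: "?U \<in> carrier_mat (n - 2) (n - 2)"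
    by (simp_all add: carrier_matI mat_delete_def)
  have "upper_triangular ?U"
  proof (unfold upper_triangular_def, intro allI impI)
    fix i j assume "i < dim_row ?U" "j < i"
    then show "?U $$ (i, j) = 0"
      using assms by (cases "j = 0") (auto simp: mat_delete_def char_mat_simps)
  qed
  then have "det ?U = prod_list (diag_mat ?U)"
    by (rule det_upper_triangular[OF _ U])
  moreover have "?U $$ (i, i) = a i" if "i < n - 2" for i
    using assms that by (cases "i = 0") (auto simp: mat_delete_def char_mat_simps)
  ultimately have det_U: "det ?U = (\<Prod>i<n - 2. a i)"
    unfolding prod_list_diag_mat[OF U] by simp
  have "n - 1 = Suc (n - 2)"
    using assms by simp
  then have sign: "(-1 :: real) ^ (n - 1) = - ((-1) ^ (n - 2))"
    by simp
  have "det ?D = (\<Sum>j<n - 1. ?D $$ (n - 2, j) * cofactor ?D (n - 2) j)"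
    by (rule laplace_expansion_row[OF D]) (use assms in simp)
  also have "\<dots> = (\<Sum>j\<in>{0, n - 2}. ?D $$ (n - 2, j) * cofactor ?D (n - 2) j)"
    by (rule sum.mono_neutral_right) (use assms in \<open>auto simp: mat_delete_def char_mat_simps\<close>)
  also have "\<dots> = - a 0 * (-1) ^ (n - 2) * det (mat_delete ?D (n - 2) 0)
      + a (n - 2) * (-1) ^ (n - 2 + (n - 2)) * det ?U"
    using assms by (simp add: mat_delete_def char_mat_simps cofactor_def)
  also have "mat_delete ?D (n - 2) 0 = tridiag_mat 1 (n - 2) x a"
    by (rule eq_matI) (use assms in \<open>auto simp: mat_delete_def tridiag_mat_def char_mat_simps\<close>)
  also note det_U
  finally have "det ?D = - a 0 * (-1) ^ (n - 2) * det (tridiag_mat 1 (n - 2) x a)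
      + (-1) ^ (n - 2 + (n - 2)) * (a (n - 2) * (\<Prod>i<n - 2. a i))"
    by (simp only: ac_simps)
  also have "(-1 :: real) ^ (n - 2 + (n - 2)) = 1"
    by (simp flip: mult_2)
  also have "a (n - 2) * (\<Prod>i<n - 2. a i) = (\<Prod>i<n - 1. a i)"
    using prod.lessThan_Suc[of a "n - 2"] \<open>n - 1 = Suc (n - 2)\<close> by simp
  finally show ?thesis
    unfolding sign by simp
qed

lemma det_char_mat:
  assumes "n \<ge> 3"
  shows "det (char_mat n a x) = x * det (tridiag_mat 1 (n - 1) x a)
    + a 0 * a 1 * det (tridiag_mat 2 (n - 2) x a)
    + a 0 * a (n - 1) * det (tridiag_mat 1 (n - 2) x a)
    + ((-1) ^ (n - 1) - 1) * (\<Prod>i<n. a i)"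
proof -
  have "n = Suc (n - 1)"
    using assms by simp
  then have prod_last: "(\<Prod>i<n. a i) = (\<Prod>i<n - 1. a i) * a (n - 1)"
    by (metis prod.lessThan_Suc diff_Suc_1)
  have prod_first: "(\<Prod>i<n. a i) = a 0 * a 1 * (\<Prod>i = 2..<n. a i)"
    using assms by (simp add: lessThan_atLeast0 prod.atLeast_Suc_lessThan numeral_2_eq_2)
  have "det (char_mat n a x) = x * det (tridiag_mat 1 (n - 1) x a)
      + a 1 * (a 0 * (det (tridiag_mat 2 (n - 2) x a) - (\<Prod>i = 2..<n. a i)))
      + (-1) ^ (n - 1) * a (n - 1) * ((-1) ^ (n - 1) * a 0 * det (tridiag_mat 1 (n - 2) x a)
         + (\<Prod>i<n - 1. a i))"
    unfolding det_char_mat_expand_row_0[OF assms] char_mat_minor_0_0[OF assms]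
      det_char_mat_minor_0_1[OF assms] det_char_mat_minor_0_last[OF assms] ..
  also have "\<dots> = x * det (tridiag_mat 1 (n - 1) x a)
      + a 0 * a 1 * det (tridiag_mat 2 (n - 2) x a)
      + ((-1) ^ (n - 1)) ^ 2 * a 0 * a (n - 1) * det (tridiag_mat 1 (n - 2) x a)
      + (-1) ^ (n - 1) * ((\<Prod>i<n - 1. a i) * a (n - 1)) - a 0 * a 1 * (\<Prod>i = 2..<n. a i)"
    by (simp add: algebra_simps power2_eq_square)
  also have "\<dots> = x * det (tridiag_mat 1 (n - 1) x a)
      + a 0 * a 1 * det (tridiag_mat 2 (n - 2) x a)
      + a 0 * a (n - 1) * det (tridiag_mat 1 (n - 2) x a)
      + ((-1) ^ (n - 1) - 1) * (\<Prod>i<n. a i)"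
    unfolding prod_last[symmetric] prod_first[symmetric]
    by (simp add: algebra_simps flip: power_mult)
  finally show ?thesis .
qed

lemma det_char_mat_odd:
  assumes "n \<ge> 3" and "odd n" and "x\<^sup>2 = - a 1 * (a 0 + a 2)"
  shows "det (char_mat n a x) =
    a 1 * a 2 * (x * det (tridiag_mat 3 (n - 3) x a) - det (tridiag_mat 2 (n - 2) x a))
    + a 0 * a (n - 1) * det (tridiag_mat 1 (n - 2) x a)"
proof -
  have "n - 1 = Suc (Suc (n - 3))" and "Suc (n - 3) = n - 2"
    using assms(1) by simp_all
  then have T1: "det (tridiag_mat 1 (n - 1) x a) =
      x * det (tridiag_mat 2 (n - 2) x a) + a 1 * a 2 * det (tridiag_mat 3 (n - 3) x a)"
    using det_tridiag_mat_Suc_Suc[of 1 "n - 3" x a] by (simp add: numeral_2_eq_2 numeral_3_eq_3)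
  have "(-1 :: real) ^ (n - 1) = 1"
    using assms(1,2) by (simp add: neg_one_even_power)
  then have "det (char_mat n a x) = x * det (tridiag_mat 1 (n - 1) x a)
      + a 0 * a 1 * det (tridiag_mat 2 (n - 2) x a)
      + a 0 * a (n - 1) * det (tridiag_mat 1 (n - 2) x a)"
    by (simp add: det_char_mat[OF assms(1)])
  also have "\<dots> = x\<^sup>2 * det (tridiag_mat 2 (n - 2) x a)
      + x * a 1 * a 2 * det (tridiag_mat 3 (n - 3) x a)
      + a 0 * a 1 * det (tridiag_mat 2 (n - 2) x a)
      + a 0 * a (n - 1) * det (tridiag_mat 1 (n - 2) x a)"
    unfolding T1 by (simp add: algebra_simps power2_eq_square)
  finally show ?thesis
    unfolding assms(3) by (simp add: algebra_simps)
qed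

theorem lemma2:
  fixes n :: nat and a :: "nat \<Rightarrow> real"
  assumes "n \<ge> 3" and "odd n"
    and "a 0 < 0"
    and "\<forall>k. 0 < k \<and> k < n \<longrightarrow> a k > 0"
    and "a 0 + a 2 < 0"
  shows "charA n a (sqrt (- a 1 * (a 0 + a 2))) < 0"
proof -
  define x where "x = sqrt (- a 1 * (a 0 + a 2))"
  have pos: "a k > 0" if "0 < k" "k < n" for k
    using assms(4) that by blast
  have "- a 1 * (a 0 + a 2) > 0"
    using pos[of 1] assms(1,5) by (simp add: mult_pos_neg)
  then have "x > 0" and "x\<^sup>2 = - a 1 * (a 0 + a 2)"
    by (simp_all add: x_def)
  have "Suc 2 = 3" and "Suc (n - 3) = n - 2"
    using assms(1) by simp_all
  then have "x * det (tridiag_mat 3 (n - 3) x a) \<le> det (tridiag_mat 2 (n - 2) x a)"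
    using det_tridiag_mat_Suc_ge[OF \<open>x > 0\<close>, of 2 "n - 3" a] pos assms(1) by force
  then have "a 1 * a 2 * (x * det (tridiag_mat 3 (n - 3) x a) - det (tridiag_mat 2 (n - 2) x a)) \<le> 0"
    using pos[of 1] pos[of 2] assms(1) by (simp add: mult_nonneg_nonpos)
  moreover have "det (tridiag_mat 1 (n - 2) x a) > 0"
    by (rule det_tridiag_mat_pos) (use \<open>x > 0\<close> pos assms(1) in auto)
  then have "a 0 * a (n - 1) * det (tridiag_mat 1 (n - 2) x a) < 0"
    using assms(1,3) pos[of "n - 1"] by (simp add: mult_neg_pos)
  ultimately show ?thesis
    unfolding charA_eq_det_char_mat x_def[symmetric] det_char_mat_odd[OF assms(1,2) \<open>x\<^sup>2 = _\<close>]
    by linarith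
qed

end
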